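(* Let $\mathcal{I}$ be a $\delta$-ONI instance with $n$ agents and run Algorithm $\mathtt{approxMMS1}(\mathcal{I},\delta)$. Let $i$ be any agent who did not receive any bag by the end of the algorithm. Then for all $k\in[n]$ with $v_i(B_k)\le1$, we have $v_i(\hat{B}_k)<1+\frac{4\delta}{3}$, where $\hat{B}_k\supseteq B_k$ is the $k$-th bag at the end of the algorithm.
   Context: Instance: agents $[n]$, goods $[m]$, additive valuations; goods with index larger than $m$ are dummy goods of value 0. Ordered: $v_i(1)\ge\dots\ge v_i(m)$ for all $i$. Normalized: every agent $i$ has a partition of the goods into $n$ bundles each of value exactly 1 to $i$ (so $\mathrm{MMS}_i=1$). $\alpha$-irreducible: for every agent $i$, $v_i(1)<\alpha$, $v_i(\{2n-1,2n,2n+1\})<\alpha$, $v_i(\{3n-2,\dots,3n+1\})<\alpha$, $v_i(\{1,2n+1\})<\alpha$. $\delta$-ONI: ordered, normalized, $(3/4+\delta)$-irreducible. $B_k=\{k,2n-k+1\}$; $N^1=\{i:v_i(B_k)\le1\ \forall k\}$; $N^1_1=\{i\in N^1:v_i(2n+1)\ge\frac14-5\delta\}$. Algorithm $\mathtt{approxMMS1}(\mathcal{I},\delta)$: $\alpha=3/4+\delta$, bags $B_1,\dots,B_n$. Phase 1: while some unassigned agent $i$ and unassigned bag $B$ have $v_i(B)\ge\alpha$, assign such $B$ to an agent valuing it at least $\alpha$, choosing an agent of $N^1_1$ whenever one qualifies. Phase 2: process remaining bags one by one; for the current bag $B$, while no unassigned agent values it at least $\alpha$, add to it an arbitrary unused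 good with index $>2n$; then assign $B$ to an unassigned agent valuing it at least $\alpha$ (preferring $N^1_1$). If a good must be added but none is left, the algorithm stops; the bags' contents at the end are $\hat{B}_k$. *)

theory Defs
  imports Complex_Main
begin

text \<open>Agents are 1..n, goods are 1..m; goods with index > m are dummy goods of value 0.
  A valuation is v :: agent => good => real, additive: the value of a set is the sum.\<close>

definition vs :: "(nat \<Rightarrow> nat \<Rightarrow> real) \<Rightarrow> nat \<Rightarrow> nat set \<Rightarrow> real" where
  "vs v i S = (\<Sum>g\<in>S. v i g)"

definition valid_instance :: "(nat \<Rightarrow> nat \<Rightarrow> real) \<Rightarrow> nat \<Rightarrow> nat \<Rightarrow> bool" where
  "valid_instance v n m \<longleftrightarrow>
     (\<forall>i\<in>{1..n}. \<forall>g. 0 \<le> v i g) \<and> (\<forall>i\<in>{1..n}. \<forall>g. m < g \<longrightarrow> v i g = 0)"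

definition ordered_inst :: "(nat \<Rightarrow> nat \<Rightarrow> real) \<Rightarrow> nat \<Rightarrow> nat \<Rightarrow> bool" where
  "ordered_inst v n m \<longleftrightarrow> (\<forall>i\<in>{1..n}. \<forall>g\<in>{1..<m}. v i (g + 1) \<le> v i g)"

definition normalized_inst :: "(nat \<Rightarrow> nat \<Rightarrow> real) \<Rightarrow> nat \<Rightarrow> nat \<Rightarrow> bool" where
  "normalized_inst v n m \<longleftrightarrow>
     (\<forall>i\<in>{1..n}. \<exists>P :: nat \<Rightarrow> nat set.
        (\<Union>j\<in>{1..n}. P j) = {1..m} \<and>
        (\<forall>j\<in>{1..n}. \<forall>j'\<in>{1..n}. j \<noteq> j' \<longrightarrow> P j \<inter> P j' = {}) \<and>
        (\<forall>j\<in>{1..n}. vs v i (P j) = 1))"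

definition irreducible_inst :: "real \<Rightarrow> (nat \<Rightarrow> nat \<Rightarrow> real) \<Rightarrow> nat \<Rightarrow> bool" where
  "irreducible_inst \<alpha> v n \<longleftrightarrow>
     (\<forall>i\<in>{1..n}. v i 1 < \<alpha> \<and>
        vs v i {2*n - 1, 2*n, 2*n + 1} < \<alpha> \<and>
        vs v i {3*n - 2 .. 3*n + 1} < \<alpha> \<and>
        vs v i {1, 2*n + 1} < \<alpha>)"

definition ONI :: "(nat \<Rightarrow> nat \<Rightarrow> real) \<Rightarrow> nat \<Rightarrow> nat \<Rightarrow> real \<Rightarrow> bool" where
  "ONI v n m \<delta> \<longleftrightarrow> valid_instance v n m \<and> ordered_inst v n m \<and> normalized_inst v n m
     \<and> irreducible_inst (3/4 + \<delta>) v n"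

definition bag0 :: "nat \<Rightarrow> nat \<Rightarrow> nat set" where
  "bag0 n k = {k, 2*n - k + 1}"

definition N1 :: "(nat \<Rightarrow> nat \<Rightarrow> real) \<Rightarrow> nat \<Rightarrow> nat set" where
  "N1 v n = {i\<in>{1..n}. \<forall>k\<in>{1..n}. vs v i (bag0 n k) \<le> 1}"

definition N11 :: "(nat \<Rightarrow> nat \<Rightarrow> real) \<Rightarrow> nat \<Rightarrow> real \<Rightarrow> nat set" where
  "N11 v n \<delta> = {i\<in>N1 v n. 1/4 - 5*\<delta> \<le> v i (2*n + 1)}"

text \<open>Algorithm state: current bag contents, owner of each bag (None = unassigned),
  and whether the algorithm has stopped because it ran out of goods.\<close>
record alg_state =
  bags :: "nat \<Rightarrow> nat set"
  owner :: "nat \<Rightarrow> nat option"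
  stopped :: bool

definition init_state :: "nat \<Rightarrow> alg_state" where
  "init_state n = \<lparr>bags = (\<lambda>k. if k \<in> {1..n} then bag0 n k else {}),
                   owner = (\<lambda>_. None), stopped = False\<rparr>"

definition UA :: "nat \<Rightarrow> alg_state \<Rightarrow> nat set" where
  "UA n s = {i\<in>{1..n}. i \<notin> ran (owner s)}"

definition UB :: "nat \<Rightarrow> alg_state \<Rightarrow> nat set" where
  "UB n s = {k\<in>{1..n}. owner s k = None}"

definition remaining :: "nat \<Rightarrow> nat \<Rightarrow> alg_state \<Rightarrow> nat set" where
  "remaining n m s = {2*n + 1 .. m} - (\<Union>k\<in>{1..n}. bags s k)"

text \<open>Phase 2 processes an arbitrary remaining bag atomically: the list gs is the sequence of
  goods added one at a time, each added only while no unassigned agent values the bag at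
  least alpha.\<close>
inductive alg_step :: "(nat \<Rightarrow> nat \<Rightarrow> real) \<Rightarrow> nat \<Rightarrow> nat \<Rightarrow> real \<Rightarrow> alg_state \<Rightarrow> alg_state \<Rightarrow> bool"
  for v n m \<delta> where
  phase1:
  "\<lbrakk> \<not> stopped s; k \<in> UB n s; i \<in> UA n s; 3/4 + \<delta> \<le> vs v i (bags s k);
     (\<exists>j\<in>UA n s \<inter> N11 v n \<delta>. 3/4 + \<delta> \<le> vs v j (bags s k)) \<longrightarrow> i \<in> N11 v n \<delta> \<rbrakk>
   \<Longrightarrow> alg_step v n m \<delta> s (s\<lparr>owner := (owner s)(k := Some i)\<rparr>)"
| phase2_assign:
  "\<lbrakk> \<not> stopped s; \<not> (\<exists>k'\<in>UB n s. \<exists>j\<in>UA n s. 3/4 + \<delta> \<le> vs v j (bags s k'));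
     k \<in> UB n s; distinct gs; set gs \<subseteq> remaining n m s;
     \<forall>l<length gs. \<forall>j\<in>UA n s. vs v j (bags s k \<union> set (take l gs)) < 3/4 + \<delta>;
     i \<in> UA n s; 3/4 + \<delta> \<le> vs v i (bags s k \<union> set gs);
     (\<exists>j\<in>UA n s \<inter> N11 v n \<delta>. 3/4 + \<delta> \<le> vs v j (bags s k \<union> set gs)) \<longrightarrow> i \<in> N11 v n \<delta> \<rbrakk>
   \<Longrightarrow> alg_step v n m \<delta> s (s\<lparr>bags := (bags s)(k := bags s k \<union> set gs),
                               owner := (owner s)(k := Some i)\<rparr>)"
| phase2_stop:
  "\<lbrakk> \<not> stopped s; \<not> (\<exists>k'\<in>UB n s. \<exists>j\<in>UA n s. 3/4 + \<delta> \<le> vs v j (bags s k'));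
     k \<in> UB n s; distinct gs; set gs = remaining n m s;
     \<forall>l\<le>length gs. \<forall>j\<in>UA n s. vs v j (bags s k \<union> set (take l gs)) < 3/4 + \<delta> \<rbrakk>
   \<Longrightarrow> alg_step v n m \<delta> s (s\<lparr>bags := (bags s)(k := bags s k \<union> set gs), stopped := True\<rparr>)"

definition alg_final :: "nat \<Rightarrow> alg_state \<Rightarrow> bool" where
  "alg_final n s \<longleftrightarrow> stopped s \<or> UB n s = {}"

end

theory Submission
  imports Defs
begin

text \<open>Write \<alpha> = 3/4 + \<delta>. By ordering and irreducibility, every good with index beyond 2n is worth
  less than \<alpha>/3 to every agent, since v(2n-1) + v(2n) + v(2n+1) < \<alpha>. A bag only grows in
  phase 2, and then only while no unassigned agent values it at \<alpha> or more; so for an agent i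
  who is never served, the bag is worth less than \<alpha> before its last added good and less than
  4\<alpha>/3 = 1 + 4\<delta>/3 afterwards. Untouched bags keep their initial value, at most 1.\<close>

lemma valuation_antimono:
  assumes "valid_instance v n m" "ordered_inst v n m" "i \<in> {1..n}" "1 \<le> a" "a \<le> b"
  shows "v i b \<le> v i a"
proof (cases "b \<le> m")
  case True
  from \<open>a \<le> b\<close> this show ?thesis
  proof (induction b rule: dec_induct)
    case (step x)
    then have "x \<in> {1..<m}" using \<open>1 \<le> a\<close> by auto
    then have "v i (x + 1) \<le> v i x" using assms(2,3) unfolding ordered_inst_def by blast
    with step show ?case by simp
  qed simp
next
  case False
  then show ?thesis using assms(1,3) unfolding valid_instance_def by fastforce
qed

lemma value_beyond_2n_lt_third:
  assumes "valid_instance v n m" "ordered_inst v n m" "irreducible_inst \<alpha> v n"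
    and "i \<in> {1..n}" "2 * n + 1 \<le> g"
  shows "v i g < \<alpha> / 3"
proof -
  have "1 \<le> n" using assms(4) by simp
  have "vs v i {2*n - 1, 2*n, 2*n + 1} < \<alpha>"
    using assms(3,4) unfolding irreducible_inst_def by blast
  moreover have "vs v i {2*n - 1, 2*n, 2*n + 1} = v i (2*n - 1) + v i (2*n) + v i (2*n + 1)"
  proof -
    have "2*n - 1 \<noteq> 2*n" "2*n - 1 \<noteq> 2*n + 1" using \<open>1 \<le> n\<close> by auto
    then show ?thesis unfolding vs_def by (simp add: algebra_simps)
  qed
  moreover have "v i (2*n + 1) \<le> v i (2*n - 1)" "v i (2*n + 1) \<le> v i (2*n)"
    using valuation_antimono[OF assms(1,2,4)] \<open>1 \<le> n\<close> by auto
  moreover have "v i g \<le> v i (2*n + 1)"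
    using valuation_antimono[OF assms(1,2,4)] assms(5) by auto
  ultimately show ?thesis by linarith
qed

lemma vs_union_split_last:
  assumes "finite B" "distinct gs" "gs \<noteq> []" "B \<inter> set gs = {}"
  shows "vs v i (B \<union> set gs) = v i (last gs) + vs v i (B \<union> set (butlast gs))"
proof -
  obtain hs g where "gs = hs @ [g]" using assms(3) rev_exhaust by blast
  with assms show ?thesis by (auto simp: vs_def)
qed

lemma alg_step_ran_owner_mono:
  assumes "alg_step v n m \<delta> s t"
  shows "ran (owner s) \<subseteq> ran (owner t)"
  using assms by cases (auto simp: UB_def ran_map_upd)

lemma reachable_bags_finite:
  assumes "(alg_step v n m \<delta>)\<^sup>*\<^sup>* (init_state n) s"
  shows "finite (bags s k)"
  using assms
proof (induction rule: rtranclp_induct)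
  case base
  then show ?case by (simp add: init_state_def bag0_def)
next
  case (step s t)
  have "finite (remaining n m s)" unfolding remaining_def by simp
  from step.hyps(2) show ?case
    using step.IH \<open>finite (remaining n m s)\<close> by cases (auto dest: finite_subset)
qed

lemma alg_step_preserves_unassigned_bound:
  assumes "0 < \<delta>" "ONI v n m \<delta>" "alg_step v n m \<delta> s t" "finite (bags s k)"
    and "j \<in> {1..n}" "j \<notin> ran (owner t)"
    and "vs v j (bags s k) < 1 + 4 * \<delta> / 3"
  shows "vs v j (bags t k) < 1 + 4 * \<delta> / 3"
proof -
  have "j \<in> UA n s"
    using alg_step_ran_owner_mono[OF assms(3)] assms(5,6) by (auto simp: UA_def)
  from assms(3) show ?thesis
  proof cases
    case phase1
    then show ?thesis using assms(7) by simp
  next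
    case (phase2_assign k' gs)
    show ?thesis
    proof (cases "k' = k \<and> gs \<noteq> []")
      case True
      have "bags s k \<inter> set gs = {}" "last gs \<in> set gs" "set gs \<subseteq> {2 * n + 1..m}"
        using phase2_assign True by (auto simp: remaining_def UB_def)
      then have "2 * n + 1 \<le> last gs" by auto
      have "vs v j (bags s k \<union> set (butlast gs)) < 3/4 + \<delta>"
        using phase2_assign True \<open>j \<in> UA n s\<close> by (simp add: butlast_conv_take)
      moreover have "v j (last gs) < (3/4 + \<delta>) / 3"
        using value_beyond_2n_lt_third assms(2,5) \<open>2 * n + 1 \<le> last gs\<close>
        unfolding ONI_def by blast
      moreover have "vs v j (bags s k \<union> set gs)
          = v j (last gs) + vs v j (bags s k \<union> set (butlast gs))"
        using vs_union_split_last assms(4) \<open>distinct gs\<close> True \<open>bags s k \<inter> set gs = {}\<close>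
        by blast
      ultimately show ?thesis using phase2_assign True by simp
    qed (use phase2_assign assms(7) in auto)
  next
    case (phase2_stop k' gs)
    have "\<forall>l\<le>length gs. \<forall>j\<in>UA n s. vs v j (bags s k' \<union> set (take l gs)) < 3/4 + \<delta>"
      using phase2_stop by blast
    then have "vs v j (bags s k' \<union> set gs) < 3/4 + \<delta>"
      using \<open>j \<in> UA n s\<close> by (metis order_refl take_all)
    then show ?thesis using phase2_stop assms(1,7) by auto
  qed
qed

theorem lemma21:
  fixes v :: "nat \<Rightarrow> nat \<Rightarrow> real" and n m :: nat and \<delta> :: real
    and s :: alg_state and i k :: nat
  assumes "0 < \<delta>"
    and "ONI v n m \<delta>"
    and "(alg_step v n m \<delta>)\<^sup>*\<^sup>* (init_state n) s"
    and "alg_final n s"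
    and "i \<in> {1..n}" and "i \<notin> ran (owner s)"
    and "k \<in> {1..n}" and "vs v i (bag0 n k) \<le> 1"
  shows "vs v i (bags s k) < 1 + 4 * \<delta> / 3"
proof -
  \<comment> \<open>The bound holds in every reachable state.\<close>
  have "i \<notin> ran (owner s) \<longrightarrow> vs v i (bags s k) < 1 + 4 * \<delta> / 3"
    using assms(3)
  proof (induction rule: rtranclp_induct)
    case base
    then show ?case using assms(1,7,8) by (simp add: init_state_def)
  next
    case (step t u)
    then show ?case
      using alg_step_ran_owner_mono alg_step_preserves_unassigned_bound[OF assms(1,2)]
        reachable_bags_finite assms(5) by blast
  qed
  with assms(6) show ?thesis by blast
qed

end
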